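(* Let $q\neq0$ and $r$ be real numbers. As formal power series in $t$, \[ \sum_{n=0}^{\infty} \hat c_n^q(r)\,\frac{t^n}{n!}=\frac{q\,(1+qt)^{r/q}}{\ln(1+qt)}\Big(1-(1+qt)^{-1/q}\Big). \] In particular, for $r=0$, \[ \sum_{n=0}^{\infty} \hat c_n^q(0)\,\frac{t^n}{n!}=\frac{q}{\ln(1+qt)}\Big(1-(1+qt)^{-1/q}\Big). \]
   Context: For a real number $q\neq 0$ and an integer $n\ge0$, write $(y|q)_n=\prod_{j=0}^{n-1}(y-jq)$, with $(y|q)_0=1$. The Cauchy polynomials with a $q$ parameter of the second kind are $\hat c_n^q(z)=\int_0^1 (-x+z|q)_n\,dx$. In the formula, $(1+qt)^{a}=\exp(a\ln(1+qt))$ with $\ln(1+qt)=\sum_{m\ge1}(-1)^{m-1}(qt)^m/m$. The right-hand side is a formal power series, since $\big(1-(1+qt)^{-1/q}\big)/\ln(1+qt)$ is one. *)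

theory Defs
  imports "HOL-Analysis.Analysis" "HOL-Computational_Algebra.Formal_Power_Series"
begin

definition qfall :: "real \<Rightarrow> real \<Rightarrow> nat \<Rightarrow> real" where
  "qfall y q n = (\<Prod>j<n. (y - real j * q))"

definition cauchy2 :: "real \<Rightarrow> nat \<Rightarrow> real \<Rightarrow> real" where
  "cauchy2 q n z = integral {0..1} (\<lambda>x. qfall (- x + z) q n)"

definition fps_ln1p :: "real \<Rightarrow> real fps" where
  "fps_ln1p q = Abs_fps (\<lambda>m. if m = 0 then 0 else (-1) ^ (m - 1) * q ^ m / real m)"

definition fps_pow1p :: "real \<Rightarrow> real \<Rightarrow> real fps" where
  "fps_pow1p q a = fps_exp 1 oo (fps_const a * fps_ln1p q)"

end

theory Submission
  imports Defs
begin

text \<open>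
  Both \<open>(1+qt)^a\<close> and the exponential generating function of \<open>(y|q)_n\<close> with \<open>y = aq\<close>
  solve the linear ODE \<open>(1+qt) H' = aq H\<close> with \<open>H(0) = 1\<close>, so they coincide.
  Differentiating \<open>(1+qt)^(y/q)\<close> in \<open>y\<close> multiplies it by \<open>ln(1+qt)/q\<close>; hence, coefficientwise,
  \<open>ln(1+qt) (1+qt)^((r-x)/q)\<close> has the antiderivative \<open>-q (1+qt)^((r-x)/q)\<close> in \<open>x\<close>, and
  integrating over \<open>[0,1]\<close> gives
  \<open>ln(1+qt) \<Sum>_n c_n(r) t^n/n! = q ((1+qt)^(r/q) - (1+qt)^((r-1)/q))\<close>.
  Since \<open>ln(1+qt)\<close> has subdegree 1, one may divide by it.
\<close>

unbundle no vec_syntax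
notation fps_nth (infixl \<open>$\<close> 75)

lemma qfall_0 [simp]: "qfall y q 0 = 1"
  by (simp add: qfall_def)

lemma qfall_Suc: "qfall y q (Suc n) = qfall y q n * (y - real n * q)"
  by (simp add: qfall_def)

lemma qfall_zero_Suc: "qfall 0 q (Suc n) = 0"
  unfolding qfall_def by (rule prod_zero) (auto intro: bexI[of _ 0])

lemma continuous_on_qfall [continuous_intros]:
  "continuous_on S g \<Longrightarrow> continuous_on S (\<lambda>x. qfall (g x) q n)"
  unfolding qfall_def by (intro continuous_intros)

lemma qfall_Suc_has_real_derivative_at_0:
  "((\<lambda>h. qfall h q (Suc k)) has_real_derivative (- q) ^ k * fact k) (at 0)"
proof (induction k)
  case 0
  show ?case
    using DERIV_ident by (simp add: qfall_Suc)
next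
  case (Suc k)
  have "((\<lambda>h. h - real (Suc k) * q) has_real_derivative 1) (at 0)"
    by (auto intro!: derivative_eq_intros)
  from DERIV_mult' [OF Suc.IH this]
  have "((\<lambda>h. qfall h q (Suc k) * (h - real (Suc k) * q)) has_real_derivative
         qfall 0 q (Suc k) * 1 + (- q) ^ k * fact k * (0 - real (Suc k) * q)) (at 0)" .
  moreover have "qfall 0 q (Suc k) * 1 + (- q) ^ k * fact k * (0 - real (Suc k) * q)
      = (- q) ^ Suc k * fact (Suc k)"
    by (simp add: qfall_zero_Suc algebra_simps)
  ultimately show ?case
    unfolding qfall_Suc [of _ _ "Suc k"] by (simp only:)
qed

lemma fps_nth_eq_qfall_if_ode:
  fixes H :: "real fps"
  assumes "H $ 0 = 1"
    and "(1 + fps_const q * fps_X) * fps_deriv H = fps_const c * H"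
  shows "H $ n = qfall c q n / fact n"
proof (induction n)
  case 0
  show ?case using assms(1) by simp
next
  case (Suc n)
  have "((1 + fps_const q * fps_X) * fps_deriv H) $ n = (fps_const c * H) $ n"
    using assms(2) by simp
  then have "real (Suc n) * H $ Suc n + q * real n * H $ n = c * H $ n"
    by (cases n) (auto simp: algebra_simps)
  then have "H $ Suc n = (c - real n * q) * H $ n / real (Suc n)"
    by (simp add: field_simps)
  then show ?case
    using Suc.IH by (simp add: qfall_Suc field_simps)
qed

lemma fps_ln1p_nth_0 [simp]: "fps_ln1p q $ 0 = 0"
  by (simp add: fps_ln1p_def)

lemma subdegree_fps_ln1p: "q \<noteq> 0 \<Longrightarrow> subdegree (fps_ln1p q) = 1"
  by (rule subdegreeI) (auto simp: fps_ln1p_def)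

lemma fps_ln1p_ode: "(1 + fps_const q * fps_X) * fps_deriv (fps_ln1p q) = fps_const q"
proof (rule fps_ext)
  fix n
  show "((1 + fps_const q * fps_X) * fps_deriv (fps_ln1p q)) $ n = fps_const q $ n"
    by (cases n) (auto simp: fps_ln1p_def field_simps)
qed

lemma fps_pow1p_nth_0: "fps_pow1p q a $ 0 = 1"
  by (simp add: fps_pow1p_def)

lemma fps_pow1p_0 [simp]: "fps_pow1p q 0 = 1"
  by (simp add: fps_pow1p_def)

lemma fps_pow1p_ode:
  "(1 + fps_const q * fps_X) * fps_deriv (fps_pow1p q a) = fps_const (a * q) * fps_pow1p q a"
proof -
  have "fps_deriv (fps_pow1p q a) = fps_pow1p q a * (fps_const a * fps_deriv (fps_ln1p q))"
    unfolding fps_pow1p_def by (simp add: fps_compose_deriv)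
  then have "(1 + fps_const q * fps_X) * fps_deriv (fps_pow1p q a)
      = fps_pow1p q a * fps_const a * ((1 + fps_const q * fps_X) * fps_deriv (fps_ln1p q))"
    by (simp add: algebra_simps)
  also have "\<dots> = fps_pow1p q a * fps_const a * fps_const q"
    by (simp only: fps_ln1p_ode)
  finally show ?thesis
    by (simp add: mult_ac)
qed

lemma fps_pow1p_nth: "fps_pow1p q a $ n = qfall (a * q) q n / fact n"
  by (rule fps_nth_eq_qfall_if_ode [OF fps_pow1p_nth_0 fps_pow1p_ode])

lemma fps_pow1p_add: "fps_pow1p q (a + b) = fps_pow1p q a * fps_pow1p q b"
proof (rule fps_ext)
  fix n
  have "(1 + fps_const q * fps_X) * fps_deriv (fps_pow1p q a * fps_pow1p q b)
      = ((1 + fps_const q * fps_X) * fps_deriv (fps_pow1p q a)) * fps_pow1p q b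
        + fps_pow1p q a * ((1 + fps_const q * fps_X) * fps_deriv (fps_pow1p q b))"
    by (simp add: fps_deriv_mult algebra_simps)
  also have "\<dots> = fps_const (a * q) * fps_pow1p q a * fps_pow1p q b
      + fps_pow1p q a * (fps_const (b * q) * fps_pow1p q b)"
    by (simp only: fps_pow1p_ode)
  also have "\<dots> = fps_const ((a + b) * q) * (fps_pow1p q a * fps_pow1p q b)"
    by (simp add: algebra_simps flip: fps_const_add)
  finally have "(fps_pow1p q a * fps_pow1p q b) $ n = qfall ((a + b) * q) q n / fact n"
    by (intro fps_nth_eq_qfall_if_ode) (simp_all add: fps_pow1p_nth_0)
  then show "fps_pow1p q (a + b) $ n = (fps_pow1p q a * fps_pow1p q b) $ n"
    by (simp add: fps_pow1p_nth)
qed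

lemma qfall_div_fact_has_real_derivative_at_0:
  assumes "q \<noteq> 0"
  shows "((\<lambda>h. qfall h q k / fact k) has_real_derivative fps_ln1p q $ k / q) (at 0)"
proof (cases k)
  case 0
  then show ?thesis by simp
next
  case (Suc m)
  have fact_k: "fact k = real (Suc m) * fact m"
    by (simp add: Suc del: of_nat_Suc)
  have "fps_ln1p q $ k / q = (- 1) ^ m * (q * q ^ m) / real (Suc m) / q"
    by (simp add: fps_ln1p_def Suc)
  also have "\<dots> = (- 1) ^ m * q ^ m / real (Suc m)"
    using assms by simp
  also have "\<dots> = (- q) ^ m / real (Suc m)"
    by (subst power_minus) (rule refl)
  also have "\<dots> = (- q) ^ m * fact m / fact k"
    unfolding fact_k by simp
  finally have "(- q) ^ m * fact m / fact k = fps_ln1p q $ k / q" ..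
  moreover have "((\<lambda>h. qfall h q k / fact k) has_real_derivative (- q) ^ m * fact m / fact k) (at 0)"
    unfolding Suc by (rule DERIV_cdivide [OF qfall_Suc_has_real_derivative_at_0])
  ultimately show ?thesis
    by (simp only:)
qed

text \<open>The binomial-type identity \<open>(z|q)_n = \<Sum>_i (n choose i) (y|q)_i (z-y|q)_(n-i)\<close>,
  read off from \<open>fps_pow1p_add\<close>, moves the derivative at \<open>y\<close> to one at \<open>0\<close>.\<close>
lemma qfall_div_fact_has_real_derivative:
  assumes "q \<noteq> 0"
  shows "((\<lambda>z. qfall z q n / fact n) has_real_derivative
           (fps_pow1p q (y / q) * fps_ln1p q) $ n / q) (at y)"
proof -
  have shift: "qfall z q n / fact n
      = (\<Sum>i=0..n. qfall y q i / fact i * (qfall (z - y) q (n - i) / fact (n - i)))" for z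
  proof -
    have "fps_pow1p q (z / q) = fps_pow1p q (y / q) * fps_pow1p q ((z - y) / q)"
      by (simp flip: fps_pow1p_add add: diff_divide_distrib)
    from arg_cong [where f = "\<lambda>f. f $ n", OF this] show ?thesis
      using assms by (simp add: fps_pow1p_nth fps_mult_nth)
  qed
  have "((\<lambda>z. qfall (z - y) q k / fact k) has_real_derivative fps_ln1p q $ k / q) (at y)" for k
    using DERIV_shift [of "\<lambda>h. qfall h q k / fact k" _ y "- y"]
      qfall_div_fact_has_real_derivative_at_0 [OF assms, of k]
    by simp
  then have "((\<lambda>z. \<Sum>i=0..n. qfall y q i / fact i * (qfall (z - y) q (n - i) / fact (n - i)))
      has_real_derivative (\<Sum>i=0..n. qfall y q i / fact i * (fps_ln1p q $ (n - i) / q))) (at y)"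
    by (intro DERIV_sum DERIV_cmult)
  also have "(\<Sum>i=0..n. qfall y q i / fact i * (fps_ln1p q $ (n - i) / q))
      = (fps_pow1p q (y / q) * fps_ln1p q) $ n / q"
    using assms by (simp add: fps_mult_nth fps_pow1p_nth sum_divide_distrib)
  finally show ?thesis
    by (simp add: shift)
qed

lemma cauchy2_has_integral:
  "((\<lambda>x. qfall (- x + z) q n) has_integral cauchy2 q n z) {0..1}"
  unfolding cauchy2_def
  by (intro integrable_integral integrable_continuous_interval continuous_intros)

lemma egf_cauchy2_times_fps_ln1p:
  assumes "q \<noteq> 0"
  shows "Abs_fps (\<lambda>n. cauchy2 q n r / fact n) * fps_ln1p q
           = fps_const q * (fps_pow1p q (r / q) - fps_pow1p q ((r - 1) / q))"
proof (rule fps_ext)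
  fix n
  define G where "G x = - q * (qfall (r - x) q n / fact n)" for x
  define g where "g x = (fps_pow1p q ((r - x) / q) * fps_ln1p q) $ n" for x
  have "(G has_real_derivative g x) (at x)" for x
  proof -
    have "((\<lambda>x. r - x) has_real_derivative - 1) (at x)"
      by (auto intro!: derivative_eq_intros)
    then have "((\<lambda>x. qfall (r - x) q n / fact n) has_real_derivative g x / q * - 1) (at x)"
      unfolding g_def by (rule DERIV_chain2 [OF qfall_div_fact_has_real_derivative [OF assms]])
    then have "(G has_real_derivative - q * (g x / q * - 1)) (at x)"
      unfolding G_def by (rule DERIV_cmult)
    then show ?thesis
      using assms by simp
  qed
  then have "(g has_integral G 1 - G 0) {0..1}"
    by (intro fundamental_theorem_of_calculus)
      (auto simp: has_real_derivative_iff_has_vector_derivative has_vector_derivative_at_within)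
  moreover have "g = (\<lambda>x. \<Sum>i=0..n. qfall (- x + r) q i / fact i * fps_ln1p q $ (n - i))"
    using assms by (simp add: g_def fps_mult_nth fps_pow1p_nth fun_eq_iff)
  moreover have "((\<lambda>x. \<Sum>i=0..n. qfall (- x + r) q i / fact i * fps_ln1p q $ (n - i)) has_integral
      (Abs_fps (\<lambda>n. cauchy2 q n r / fact n) * fps_ln1p q) $ n) {0..1}"
    unfolding fps_mult_nth fps_nth_Abs_fps
    by (intro has_integral_sum has_integral_mult_left has_integral_divide cauchy2_has_integral)
      auto
  ultimately have "(Abs_fps (\<lambda>n. cauchy2 q n r / fact n) * fps_ln1p q) $ n = G 1 - G 0"
    using has_integral_unique by blast
  also have "\<dots> = (fps_const q * (fps_pow1p q (r / q) - fps_pow1p q ((r - 1) / q))) $ n"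
    using assms by (simp add: G_def fps_pow1p_nth right_diff_distrib)
  finally show "(Abs_fps (\<lambda>n. cauchy2 q n r / fact n) * fps_ln1p q) $ n = \<dots>" .
qed

lemma fps_dvd_if_subdegree_one:
  fixes f g :: "'a :: field fps"
  assumes "subdegree f = 1" and "g $ 0 = 0"
  shows "f dvd g"
proof (cases "g = 0")
  case False
  have "f \<noteq> 0"
    using assms(1) by auto
  moreover have "subdegree g \<noteq> 0"
    using False assms(2) by (simp add: subdegree_eq_0_iff)
  ultimately show ?thesis
    using False assms(1) by (simp add: fps_dvd_iff)
qed simp

lemma egf_cauchy2:
  assumes "q \<noteq> 0"
  shows "Abs_fps (\<lambda>n. cauchy2 q n r / fact n)
           = fps_const q * fps_pow1p q (r / q) * ((1 - fps_pow1p q (- 1 / q)) / fps_ln1p q)"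
proof -
  have "fps_ln1p q dvd 1 - fps_pow1p q (- 1 / q)"
    using assms by (intro fps_dvd_if_subdegree_one) (simp_all add: subdegree_fps_ln1p fps_pow1p_nth_0)
  moreover have "fps_ln1p q \<noteq> 0"
    using subdegree_fps_ln1p [OF assms] by auto
  moreover have "fps_pow1p q (r / q) - fps_pow1p q ((r - 1) / q)
      = fps_pow1p q (r / q) * (1 - fps_pow1p q (- 1 / q))"
    by (simp add: algebra_simps flip: fps_pow1p_add add: diff_divide_distrib)
  ultimately show ?thesis
    using egf_cauchy2_times_fps_ln1p [OF assms, of r]
    by (metis div_mult_swap mult.assoc nonzero_mult_div_cancel_right)
qed

theorem mainTheorem4:
  fixes q r :: real
  assumes "q \<noteq> 0"
  shows "Abs_fps (\<lambda>n. cauchy2 q n r / fact n)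
           = fps_const q * fps_pow1p q (r / q) * ((1 - fps_pow1p q (- 1 / q)) / fps_ln1p q)
         \<and> Abs_fps (\<lambda>n. cauchy2 q n 0 / fact n)
           = fps_const q * ((1 - fps_pow1p q (- 1 / q)) / fps_ln1p q)"
  using egf_cauchy2 [OF assms, of r] egf_cauchy2 [OF assms, of 0] by simp

end
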